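(* Let $M$ be a compact Kähler manifold of complex dimension $3$ with trivial canonical bundle. Suppose $H_2(M,\mathbb{Z})$ is torsion-free with basis $e_1,\dots,e_r$, and let $e^1,\dots,e^r\in H^2(M,\mathbb{Z})$ be the dual basis. Let $P$ be the set of nonzero classes $\eta=\sum_j a^je_j$ with all $a^j\ge0$. Let $\mathcal{R}=\mathbb{Q}[[q_1,\dots,q_r]]$, put $q^\eta=\prod_j q_j^{a^j}$, and fix rational numbers $(N_\eta)_{\eta\in P}$. Define the $\mathcal{R}$-bilinear product $\star$ on $H^{ev}(M,\mathbb{Q})\otimes\mathcal{R}$ on homogeneous classes by $\zeta_1\star\zeta_2=\zeta_1\cup\zeta_2$, unless $\zeta_1,\zeta_2\in H^2(M,\mathbb{Q})$, in which case \[\zeta_1\star\zeta_2=\zeta_1\cup\zeta_2+\sum_{\eta\in P}\zeta_1(\eta)\zeta_2(\eta)N_\eta\frac{q^\eta}{1-q^\eta}\eta^\vee .\] For $j=1,\dots,r$, let $\delta_j=2\pi i\,q_j\,\partial/\partial q_j$, acting on $H^{ev}(M,\mathbb{C})\otimes\mathcal{R}$ through the coefficients. Define operators $D_j=\delta_j+(e^j\star\,\cdot\,)$ on $H^{ev}(M,\mathbb{C})\otimes\mathcal{R}$. Then $D_jD_k=D_kD_j$ for all $j,k$. Equivalently, the formal connection $\nabla=d+\sum_j dt_j\otimes(e^j\star\cdot)$, where $q_j=e^{2\pi i t_j}$, is flat.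
   Context: $\frac{q^\eta}{1-q^\eta}$ denotes the formal series $\sum_{m\ge1}q^{m\eta}$. $\eta^\vee\in H^4(M,\mathbb{Q})$ is the Poincaré dual of $\eta$, characterized by $\int_M\eta^\vee\cup\zeta=\zeta(\eta)$ for $\zeta\in H^2$. Here $\zeta(\eta)$ is the pairing of cohomology with homology. *)

theory Defs
  imports "HOL-Analysis.Analysis"
begin

text \<open>
Coordinate model of the even cohomology of the Calabi--Yau threefold M with coefficients
in the ring of formal power series in q_1,...,q_r.  The index type 'r (finite) indexes the
basis e_1,...,e_r of H_2(M,Z); r = CARD('r).

Formal power series: a monomial q^a is an exponent vector a :: 'r => nat; a series is its
coefficient function.

H^ev(M,C) has the basis
  1 (in H^0),  e^1..e^r (in H^2, dual to e_1..e_r),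
  e_1^v..e_r^v (in H^4, Poincare duals of e_1..e_r, so int e^i cup e_j^v = delta_ij),
  pt (in H^6, int pt = 1).
The cup product is then determined by the triple intersection numbers
  c i j l = int_M e^i cup e^j cup e^l :
  e^i cup e^j = sum_l c i j l e_l^v,  e^i cup e_l^v = delta_il pt.
\<close>

type_synonym 'r mon = "'r \<Rightarrow> nat"
type_synonym 'r ser = "'r mon \<Rightarrow> complex"

definition ser_zero :: "'r ser" where "ser_zero = (\<lambda>b. 0)"
definition ser_one :: "'r ser" where "ser_one = (\<lambda>b. if b = (\<lambda>_. 0) then 1 else 0)"
definition ser_add :: "'r ser \<Rightarrow> 'r ser \<Rightarrow> 'r ser" where
  "ser_add f g = (\<lambda>b. f b + g b)"
definition ser_scale :: "complex \<Rightarrow> 'r ser \<Rightarrow> 'r ser" where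
  "ser_scale z f = (\<lambda>b. z * f b)"
definition ser_mult :: "'r::finite ser \<Rightarrow> 'r ser \<Rightarrow> 'r ser" where
  "ser_mult f g = (\<lambda>b. \<Sum>a\<in>{a. \<forall>i. a i \<le> b i}. f a * g (\<lambda>i. b i - a i))"

text \<open>The series q^eta/(1-q^eta) = sum_{m>=1} q^(m eta).\<close>
definition geom :: "'r mon \<Rightarrow> 'r ser" where
  "geom \<eta> = (\<lambda>b. if \<exists>m::nat. m \<ge> 1 \<and> b = (\<lambda>i. m * \<eta> i) then 1 else 0)"

text \<open>delta_j = 2 pi i q_j d/dq_j acting on coefficients.\<close>
definition ser_delta :: "'r \<Rightarrow> 'r ser \<Rightarrow> 'r ser" where
  "ser_delta j f = (\<lambda>b. 2 * of_real pi * \<i> * of_nat (b j) * f b)"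

record 'r hev =
  h0 :: "'r ser"
  h2 :: "'r \<Rightarrow> 'r ser"
  h4 :: "'r \<Rightarrow> 'r ser"
  h6 :: "'r ser"

definition hev_add :: "'r hev \<Rightarrow> 'r hev \<Rightarrow> 'r hev" where
  "hev_add x y = \<lparr>h0 = ser_add (h0 x) (h0 y),
                  h2 = (\<lambda>i. ser_add (h2 x i) (h2 y i)),
                  h4 = (\<lambda>i. ser_add (h4 x i) (h4 y i)),
                  h6 = ser_add (h6 x) (h6 y)\<rparr>"

definition hev_delta :: "'r \<Rightarrow> 'r hev \<Rightarrow> 'r hev" where
  "hev_delta j x = \<lparr>h0 = ser_delta j (h0 x),
                    h2 = (\<lambda>i. ser_delta j (h2 x i)),
                    h4 = (\<lambda>i. ser_delta j (h4 x i)),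
                    h6 = ser_delta j (h6 x)\<rparr>"

definition ecls :: "'r \<Rightarrow> 'r hev" where
  "ecls j = \<lparr>h0 = ser_zero, h2 = (\<lambda>i. if i = j then ser_one else ser_zero),
             h4 = (\<lambda>_. ser_zero), h6 = ser_zero\<rparr>"

definition cup :: "('r::finite \<Rightarrow> 'r \<Rightarrow> 'r \<Rightarrow> int) \<Rightarrow> 'r hev \<Rightarrow> 'r hev \<Rightarrow> 'r hev" where
  "cup c x y = \<lparr>
     h0 = ser_mult (h0 x) (h0 y),
     h2 = (\<lambda>i. ser_add (ser_mult (h0 x) (h2 y i)) (ser_mult (h2 x i) (h0 y))),
     h4 = (\<lambda>l. ser_add (ser_add (ser_mult (h0 x) (h4 y l)) (ser_mult (h4 x l) (h0 y)))
              (\<lambda>b. \<Sum>i\<in>UNIV. \<Sum>j\<in>UNIV. of_int (c i j l) * ser_mult (h2 x i) (h2 y j) b)),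
     h6 = ser_add (ser_add (ser_mult (h0 x) (h6 y)) (ser_mult (h6 x) (h0 y)))
              (\<lambda>b. \<Sum>i\<in>UNIV. ser_mult (h2 x i) (h4 y i) b + ser_mult (h4 x i) (h2 y i) b)\<rparr>"

definition pair2 :: "'r::finite hev \<Rightarrow> 'r mon \<Rightarrow> 'r ser" where
  "pair2 x \<eta> = (\<lambda>b. \<Sum>i\<in>UNIV. of_nat (\<eta> i) * h2 x i b)"

definition Pset :: "'r mon set" where
  "Pset = {\<eta>. \<eta> \<noteq> (\<lambda>_. 0)}"

text \<open>Quantum correction: sum over eta in P of zeta1(eta) zeta2(eta) N_eta q^eta/(1-q^eta) eta^v,
  where eta^v = sum_l eta_l e_l^v.  The formal infinite sum is taken coefficientwise.\<close>
definition qcorr :: "('r::finite mon \<Rightarrow> rat) \<Rightarrow> 'r hev \<Rightarrow> 'r hev \<Rightarrow> 'r hev" where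
  "qcorr N x y = \<lparr>h0 = ser_zero, h2 = (\<lambda>_. ser_zero),
     h4 = (\<lambda>l b. \<Sum>\<^sub>\<infinity>\<eta>\<in>Pset. of_nat (\<eta> l) * of_rat (N \<eta>) *
                     ser_mult (ser_mult (pair2 x \<eta>) (pair2 y \<eta>)) (geom \<eta>) b),
     h6 = ser_zero\<rparr>"

definition qstar :: "('r::finite \<Rightarrow> 'r \<Rightarrow> 'r \<Rightarrow> int) \<Rightarrow> ('r mon \<Rightarrow> rat) \<Rightarrow> 'r hev \<Rightarrow> 'r hev \<Rightarrow> 'r hev" where
  "qstar c N x y = hev_add (cup c x y) (qcorr N x y)"

definition Dop :: "('r::finite \<Rightarrow> 'r \<Rightarrow> 'r \<Rightarrow> int) \<Rightarrow> ('r mon \<Rightarrow> rat) \<Rightarrow> 'r \<Rightarrow> 'r hev \<Rightarrow> 'r hev" where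
  "Dop c N j x = hev_add (hev_delta j x) (qstar c N (ecls j) x)"

end

theory Submission
  imports Defs
begin

text \<open>
  In coordinates, D j shifts H^0 into H^2, H^2 into H^4 and H^4 into H^6, and otherwise acts
  by delta j.  Since the delta's commute, the commutator [D j, D k] reduces to terms that are
  symmetric in j and k by the symmetry of the triple intersection numbers, except for the
  quantum part of the H^4-component.  There the Leibniz rule for delta j leaves the terms
  eta k * delta j (q^eta/(1-q^eta)), which are symmetric because that series is supported on
  the multiples m * eta, where delta j acts as multiplication by 2 pi i m * eta j.
\<close>

lemma finite_mon_le: "finite {a::'r::finite mon. \<forall>i. a i \<le> b i}"
proof -
  have "{a::'r mon. \<forall>i. a i \<le> b i} = Pi\<^sub>E UNIV (\<lambda>i. {..b i})"
    by (auto simp: PiE_UNIV_domain Pi_def)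
  then show ?thesis
    by (simp add: finite_PiE)
qed

lemma ser_zero_apply [simp]: "ser_zero b = 0"
  by (simp add: ser_zero_def)

lemma ser_mult_one_left [simp]: "ser_mult ser_one f = (f :: 'r::finite ser)"
proof
  fix b :: "'r mon"
  have "ser_mult ser_one f b
      = (\<Sum>a\<in>{a. \<forall>i. a i \<le> b i}. if a = (\<lambda>_. 0) then f (\<lambda>i. b i - a i) else 0)"
    unfolding ser_mult_def ser_one_def by (intro sum.cong) auto
  then show "ser_mult ser_one f b = f b"
    using finite_mon_le[of b] by (simp add: sum.delta)
qed

lemma ser_mult_zero_left [simp]: "ser_mult ser_zero f = ser_zero"
  unfolding ser_mult_def ser_zero_def by simp

lemma ser_mult_add_left: "ser_mult (ser_add f g) h = ser_add (ser_mult f h) (ser_mult g h)"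
  unfolding ser_mult_def ser_add_def by (simp add: sum.distrib algebra_simps)

lemma ser_mult_scale_left: "ser_mult (ser_scale z f) g = ser_scale z (ser_mult f g)"
  unfolding ser_mult_def ser_scale_def by (simp add: sum_distrib_left algebra_simps)

lemma ser_mult_scale_right: "ser_mult f (ser_scale z g) = ser_scale z (ser_mult f g)"
  unfolding ser_mult_def ser_scale_def by (simp add: sum_distrib_left algebra_simps)

lemma ser_delta_commute: "ser_delta j (ser_delta k f) = ser_delta k (ser_delta j f)"
  unfolding ser_delta_def by (simp add: algebra_simps)

lemma ser_delta_add: "ser_delta j (ser_add f g) = ser_add (ser_delta j f) (ser_delta j g)"
  unfolding ser_delta_def ser_add_def by (simp add: algebra_simps)

lemma ser_delta_mult:
  "ser_delta j (ser_mult f g) = ser_add (ser_mult (ser_delta j f) g) (ser_mult f (ser_delta j g))"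
proof
  fix b
  have "(of_nat (b j) :: complex) = of_nat (a j) + of_nat (b j - a j)" if "a j \<le> b j" for a
    using that by simp
  then show "ser_delta j (ser_mult f g) b
      = ser_add (ser_mult (ser_delta j f) g) (ser_mult f (ser_delta j g)) b"
    unfolding ser_delta_def ser_mult_def ser_add_def sum_distrib_left sum.distrib[symmetric]
    by (intro sum.cong) (auto simp: algebra_simps)
qed

lemma geom_eq_0_unless_le:
  assumes "\<eta> \<noteq> (\<lambda>_. 0)" and "\<not> (\<forall>i. \<eta> i \<le> b i)"
  shows "geom \<eta> b = 0"
proof (rule ccontr)
  assume "geom \<eta> b \<noteq> 0"
  then obtain m :: nat where "m \<ge> 1" and "b = (\<lambda>i. m * \<eta> i)"
    unfolding geom_def by (auto split: if_splits)
  then have "\<forall>i. \<eta> i \<le> b i" by simp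
  with assms(2) show False by contradiction
qed

lemma ser_mult_geom_eq_0_unless_le:
  assumes "\<eta> \<noteq> (\<lambda>_. 0)" and "\<not> (\<forall>i. \<eta> i \<le> b i)"
  shows "ser_mult f (geom \<eta>) b = 0"
proof -
  have "geom \<eta> (\<lambda>i. b i - a i) = 0" for a
    using assms(2) by (intro geom_eq_0_unless_le[OF assms(1)]) (meson diff_le_self order_trans)
  then show ?thesis
    unfolding ser_mult_def by simp
qed

text \<open>On the support of geom eta every exponent b is a multiple of eta, so
  b j * eta k = b k * eta j.\<close>
lemma ser_delta_geom_proportional:
  "ser_scale (of_nat (\<eta> k)) (ser_delta j (geom \<eta>))
 = ser_scale (of_nat (\<eta> j)) (ser_delta k (geom \<eta>))"
  unfolding ser_scale_def ser_delta_def geom_def by (rule ext) auto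

definition Pset_below :: "'r mon \<Rightarrow> 'r mon set" where
  "Pset_below b = {\<eta> \<in> Pset. \<forall>i. \<eta> i \<le> b i}"

lemma finite_Pset_below: "finite (Pset_below (b :: 'r::finite mon))"
  unfolding Pset_below_def by (rule finite_subset[OF _ finite_mon_le[of b]]) auto

text \<open>Only classes eta below b contribute to the coefficient of q^b, as geom eta is supported
  on the multiples of eta.\<close>
lemma infsum_Pset_geom:
  fixes g :: "'r::finite mon \<Rightarrow> complex"
  shows "(\<Sum>\<^sub>\<infinity>\<eta>\<in>Pset. g \<eta> * ser_mult (f \<eta>) (geom \<eta>) b)
       = (\<Sum>\<eta>\<in>Pset_below b. g \<eta> * ser_mult (f \<eta>) (geom \<eta>) b)"
proof -
  have "(\<Sum>\<^sub>\<infinity>\<eta>\<in>Pset. g \<eta> * ser_mult (f \<eta>) (geom \<eta>) b)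
      = (\<Sum>\<^sub>\<infinity>\<eta>\<in>Pset_below b. g \<eta> * ser_mult (f \<eta>) (geom \<eta>) b)"
  proof (rule infsum_cong_neutral)
    fix \<eta> assume "\<eta> \<in> Pset - Pset_below b"
    then have "\<eta> \<noteq> (\<lambda>_. 0)" and "\<not> (\<forall>i. \<eta> i \<le> b i)"
      by (auto simp: Pset_def Pset_below_def)
    then show "g \<eta> * ser_mult (f \<eta>) (geom \<eta>) b = 0"
      by (simp add: ser_mult_geom_eq_0_unless_le)
  qed (auto simp: Pset_below_def)
  then show ?thesis
    by (simp add: finite_Pset_below)
qed

lemma pair2_ecls: "pair2 (ecls j) \<eta> = ser_scale (of_nat (\<eta> j)) ser_one"
  unfolding pair2_def ecls_def ser_scale_def
  by (rule ext) (simp add: if_distrib if_distribR sum.delta cong: if_cong)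

definition quantum_coeff :: "('r::finite mon \<Rightarrow> rat) \<Rightarrow> 'r \<Rightarrow> 'r \<Rightarrow> 'r hev \<Rightarrow> 'r ser" where
  "quantum_coeff N j l y = (\<lambda>b. \<Sum>\<eta>\<in>Pset_below b.
     of_nat (\<eta> j * \<eta> l) * of_rat (N \<eta>) * ser_mult (pair2 y \<eta>) (geom \<eta>) b)"

lemma quantum_coeff_commute: "quantum_coeff N j l = quantum_coeff N l j"
  unfolding quantum_coeff_def by (simp add: mult.commute)

lemma h4_qcorr_ecls: "h4 (qcorr N (ecls j) y) l = quantum_coeff N j l y"
proof
  fix b
  have "h4 (qcorr N (ecls j) y) l b = (\<Sum>\<^sub>\<infinity>\<eta>\<in>Pset.
      of_nat (\<eta> j * \<eta> l) * of_rat (N \<eta>) * ser_mult (pair2 y \<eta>) (geom \<eta>) b)"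
    unfolding qcorr_def pair2_ecls ser_mult_scale_left by (simp add: ser_scale_def algebra_simps)
  then show "h4 (qcorr N (ecls j) y) l b = quantum_coeff N j l y b"
    unfolding quantum_coeff_def by (simp only: infsum_Pset_geom)
qed

lemma h0_Dop: "h0 (Dop c N j y) = ser_delta j (h0 y)"
  unfolding Dop_def qstar_def hev_add_def hev_delta_def cup_def qcorr_def ecls_def
  by (simp add: ser_add_def)

lemma h2_Dop:
  "h2 (Dop c N j y) i = ser_add (ser_delta j (h2 y i)) (if i = j then h0 y else ser_zero)"
  unfolding Dop_def qstar_def hev_add_def hev_delta_def cup_def qcorr_def ecls_def
  by (simp add: ser_add_def)

lemma h4_Dop:
  "h4 (Dop c N j y) l = ser_add (ser_add (ser_delta j (h4 y l))
     (\<lambda>b. \<Sum>m\<in>UNIV. of_int (c j m l) * h2 y m b)) (quantum_coeff N j l y)"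
  unfolding Dop_def qstar_def hev_add_def hev_delta_def hev.select_convs h4_qcorr_ecls
  by (simp add: cup_def ecls_def ser_add_def if_distrib if_distribR sum.swap[of _ UNIV] add.assoc
      cong: if_cong)

lemma h6_Dop: "h6 (Dop c N j y) = ser_add (ser_delta j (h6 y)) (h4 y j)"
  unfolding Dop_def qstar_def hev_add_def hev_delta_def cup_def qcorr_def ecls_def
  by (simp add: ser_add_def if_distrib if_distribR cong: if_cong)

lemma pair2_Dop:
  "pair2 (Dop c N k x) \<eta> = ser_add (ser_delta k (pair2 x \<eta>)) (ser_scale (of_nat (\<eta> k)) (h0 x))"
proof
  fix b
  have "(\<Sum>i\<in>UNIV. of_nat (\<eta> i) * (if i = k then h0 x else ser_zero) b)
      = of_nat (\<eta> k) * h0 x b"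
    by (simp add: if_distrib if_distribR sum.delta cong: if_cong)
  then show "pair2 (Dop c N k x) \<eta> b
      = ser_add (ser_delta k (pair2 x \<eta>)) (ser_scale (of_nat (\<eta> k)) (h0 x)) b"
    unfolding pair2_def h2_Dop
    by (simp add: ser_add_def ser_scale_def ser_delta_def distrib_left sum.distrib sum_distrib_left
        algebra_simps)
qed

lemma ser_delta_quantum_coeff:
  "ser_delta j (quantum_coeff N k l x) b = (\<Sum>\<eta>\<in>Pset_below b.
     of_nat (\<eta> k * \<eta> l) * of_rat (N \<eta>) *
     (ser_mult (ser_delta j (pair2 x \<eta>)) (geom \<eta>) b
      + ser_mult (pair2 x \<eta>) (ser_delta j (geom \<eta>)) b))"
proof -
  have "ser_delta j (quantum_coeff N k l x) b = (\<Sum>\<eta>\<in>Pset_below b.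
      of_nat (\<eta> k * \<eta> l) * of_rat (N \<eta>) * ser_delta j (ser_mult (pair2 x \<eta>) (geom \<eta>)) b)"
    unfolding quantum_coeff_def ser_delta_def by (simp add: sum_distrib_left algebra_simps)
  then show ?thesis
    by (simp add: ser_delta_mult ser_add_def)
qed

lemma quantum_coeff_Dop:
  "quantum_coeff N j l (Dop c N k x) b = (\<Sum>\<eta>\<in>Pset_below b.
     of_nat (\<eta> j * \<eta> l) * of_rat (N \<eta>) *
     (ser_mult (ser_delta k (pair2 x \<eta>)) (geom \<eta>) b
      + of_nat (\<eta> k) * ser_mult (h0 x) (geom \<eta>) b))"
  unfolding quantum_coeff_def pair2_Dop ser_mult_add_left ser_mult_scale_left
  by (simp add: ser_add_def ser_scale_def)

lemma quantum_coeff_flatness: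
  "ser_delta j (quantum_coeff N k l x) b + quantum_coeff N j l (Dop c N k x) b
 = ser_delta k (quantum_coeff N j l x) b + quantum_coeff N k l (Dop c N j x) b"
proof -
  define A where "A j \<eta> = ser_mult (ser_delta j (pair2 x \<eta>)) (geom \<eta>) b" for j \<eta>
  define B where "B j \<eta> = ser_mult (pair2 x \<eta>) (ser_delta j (geom \<eta>)) b" for j \<eta>
  define H where "H \<eta> = ser_mult (h0 x) (geom \<eta>) b" for \<eta>
  have B_proportional: "of_nat (\<eta> k) * B j \<eta> = of_nat (\<eta> j) * B k \<eta>" for \<eta>
    using arg_cong[OF ser_delta_geom_proportional[of \<eta> k j], of "\<lambda>g. ser_mult (pair2 x \<eta>) g b"]
    unfolding B_def ser_mult_scale_right by (simp add: ser_scale_def)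
  have expand: "ser_delta j (quantum_coeff N k l x) b + quantum_coeff N j l (Dop c N k x) b
    = (\<Sum>\<eta>\<in>Pset_below b. of_nat (\<eta> l) * of_rat (N \<eta>) *
        (of_nat (\<eta> k) * A j \<eta> + of_nat (\<eta> j) * A k \<eta> + of_nat (\<eta> k) * B j \<eta>
         + of_nat (\<eta> j * \<eta> k) * H \<eta>))" for j k
    unfolding ser_delta_quantum_coeff quantum_coeff_Dop A_def B_def H_def sum.distrib[symmetric]
    by (intro sum.cong) (simp_all add: algebra_simps)
  show ?thesis
    unfolding expand using B_proportional by (intro sum.cong) (simp_all add: algebra_simps)
qed

lemma h0_Dop_commute: "h0 (Dop c N j (Dop c N k x)) = h0 (Dop c N k (Dop c N j x))"
  by (simp add: h0_Dop ser_delta_commute)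

lemma h2_Dop_commute: "h2 (Dop c N j (Dop c N k x)) = h2 (Dop c N k (Dop c N j x))"
  by (intro ext) (simp add: h2_Dop h0_Dop ser_add_def ser_delta_def if_distribR algebra_simps)

lemma h4_Dop_commute:
  assumes "c j k l = c k j l"
  shows "h4 (Dop c N j (Dop c N k x)) l = h4 (Dop c N k (Dop c N j x)) l"
proof
  fix b
  have expand: "h4 (Dop c N j (Dop c N k x)) l b
    = ser_delta j (ser_delta k (h4 x l)) b
      + (\<Sum>m\<in>UNIV. of_int (c k m l) * ser_delta j (h2 x m) b)
      + (\<Sum>m\<in>UNIV. of_int (c j m l) * ser_delta k (h2 x m) b) + of_int (c j k l) * h0 x b
      + (ser_delta j (quantum_coeff N k l x) b + quantum_coeff N j l (Dop c N k x) b)" for j k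
  proof -
    have "ser_delta j (h4 (Dop c N k x) l) b = ser_delta j (ser_delta k (h4 x l)) b
        + (\<Sum>m\<in>UNIV. of_int (c k m l) * ser_delta j (h2 x m) b)
        + ser_delta j (quantum_coeff N k l x) b"
      unfolding h4_Dop ser_delta_add
      by (simp add: ser_add_def ser_delta_def sum_distrib_left algebra_simps)
    moreover have "(\<Sum>m\<in>UNIV. of_int (c j m l) * h2 (Dop c N k x) m b)
        = (\<Sum>m\<in>UNIV. of_int (c j m l) * ser_delta k (h2 x m) b) + of_int (c j k l) * h0 x b"
      unfolding h2_Dop ser_add_def distrib_left sum.distrib
      by (simp add: if_distrib if_distribR sum.delta cong: if_cong)
    ultimately show ?thesis
      unfolding h4_Dop[of c N j] by (simp add: ser_add_def algebra_simps)
  qed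
  show "h4 (Dop c N j (Dop c N k x)) l b = h4 (Dop c N k (Dop c N j x)) l b"
    unfolding expand using assms quantum_coeff_flatness[of j N k l x b c] ser_delta_commute[of j k]
    by (simp add: algebra_simps)
qed

lemma h6_Dop_commute:
  assumes "\<And>m. c k m j = c j m k"
  shows "h6 (Dop c N j (Dop c N k x)) = h6 (Dop c N k (Dop c N j x))"
  unfolding h6_Dop h4_Dop ser_delta_add ser_delta_commute[of j k]
  by (simp add: ser_add_def assms quantum_coeff_commute[of N j k] algebra_simps)

theorem mainTheorem4:
  fixes c :: "'r::finite \<Rightarrow> 'r \<Rightarrow> 'r \<Rightarrow> int"
    and N :: "'r mon \<Rightarrow> rat"
    and j k :: 'r
  assumes "\<And>i1 i2 i3. c i1 i2 i3 = c i2 i1 i3"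
      and "\<And>i1 i2 i3. c i1 i2 i3 = c i1 i3 i2"
  shows "Dop c N j (Dop c N k x) = Dop c N k (Dop c N j x)"
proof (rule hev.equality)
  show "h4 (Dop c N j (Dop c N k x)) = h4 (Dop c N k (Dop c N j x))"
    by (intro ext h4_Dop_commute assms(1))
  have "c k m j = c j m k" for m
    using assms by metis
  then show "h6 (Dop c N j (Dop c N k x)) = h6 (Dop c N k (Dop c N j x))"
    by (rule h6_Dop_commute)
qed (simp_all add: h0_Dop_commute h2_Dop_commute)

end
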